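(* Let $n$ be such that $n/2$ is odd, let $\Omega\subseteq\mathbb{R}^n$ be open, let $\underline{f}$ be a vector-valued function on $\Omega$ and let $\lambda\in\mathbb{C}\setminus\{0\}$. With $A=M^{ie_N}\partial_{\underline{x}}^{-\underline{f}}$ and $B=M^{ie_N}\partial_{\underline{x}}^{\underline{f}}$ acting on (sufficiently smooth) $\mathbb{C}_n$-valued functions on $\Omega$, the following direct sum decompositions hold: (i) $\ker(A^2-\lambda^2)=\ker\left(\partial_{\underline{x}}-M^{\underline{f}+\lambda ie_N}\right)\oplus\ker\left(\partial_{\underline{x}}-M^{\underline{f}-\lambda ie_N}\right)$; (ii) $\ker(B^2-\lambda^2)=\ker\left(\partial_{\underline{x}}+M^{\underline{f}-\lambda ie_N}\right)\oplus\ker\left(\partial_{\underline{x}}+M^{\underline{f}+\lambda ie_N}\right)$.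
   Context: $\mathbb{R}_{0,n}$ is the real Clifford algebra generated by an orthonormal basis $e_1,\dots,e_n$ of $\mathbb{R}^n$ with relations $e_je_k+e_ke_j=-2\delta_{jk}$; $\mathbb{C}_n=\mathbb{R}_{0,n}\otimes\mathbb{C}$, with $i$ the complex unit. $e_N=e_1e_2\cdots e_n$ is the pseudo-scalar. The Dirac operator is $\partial_{\underline{x}}=\sum_{j=1}^n e_j\partial_{x_j}$, acting from the left. For a function $f$, $M^f$ is right multiplication: $M^fg=gf$; $\partial_{\underline{x}}^{\pm f}=\partial_{\underline{x}}\pm M^f$. *)

theory Defs
  imports "HOL-Analysis.Analysis"
begin

text \<open>Complex Clifford algebra C_n = R_{0,n} (x) C, where the basis vectors e_j of R^n
  are indexed by a finite linearly ordered type 'n (so n = CARD('n)).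
  An element is given by its coordinates with respect to the blade basis
  e_A = e_{j1} e_{j2} ... e_{jk} (j1 < j2 < ... < jk, A = {j1,...,jk}).\<close>

type_synonym 'n cl = "'n set \<Rightarrow> complex"

text \<open>Sign of the blade product: e_A e_B = cl_sign A B * e_(A symdiff B),
  using e_j e_k = - e_k e_j (j ~= k) and e_j^2 = -1.\<close>
definition cl_sign :: "'n::{finite,linorder} set \<Rightarrow> 'n set \<Rightarrow> complex" where
  "cl_sign A B = (-1) ^ (card {(a, b). a \<in> A \<and> b \<in> B \<and> b < a} + card (A \<inter> B))"

definition cl_mult :: "'n::{finite,linorder} cl \<Rightarrow> 'n cl \<Rightarrow> 'n cl" where
  "cl_mult a b = (\<lambda>C. \<Sum>A\<in>UNIV. \<Sum>B\<in>UNIV.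
       if (A - B) \<union> (B - A) = C then cl_sign A B * a A * b B else 0)"

definition cl_add :: "'n cl \<Rightarrow> 'n cl \<Rightarrow> 'n cl" where
  "cl_add a b = (\<lambda>A. a A + b A)"

definition cl_sub :: "'n cl \<Rightarrow> 'n cl \<Rightarrow> 'n cl" where
  "cl_sub a b = (\<lambda>A. a A - b A)"

definition cl_scale :: "complex \<Rightarrow> 'n cl \<Rightarrow> 'n cl" where
  "cl_scale c a = (\<lambda>A. c * a A)"

definition cl_zero :: "'n cl" where
  "cl_zero = (\<lambda>A. 0)"

definition cl_e :: "'n \<Rightarrow> 'n cl" where
  "cl_e j = (\<lambda>A. if A = {j} then 1 else 0)"

definition cl_eN :: "'n cl" where
  "cl_eN = (\<lambda>A. if A = UNIV then 1 else 0)"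

definition cl_vec :: "(real, 'n::finite) vec \<Rightarrow> 'n cl" where
  "cl_vec v = (\<lambda>A. if card A = 1 then complex_of_real (v $ (THE j. A = {j})) else 0)"

definition pd :: "'n::finite \<Rightarrow> ((real, 'n) vec \<Rightarrow> complex) \<Rightarrow> (real, 'n) vec \<Rightarrow> complex" where
  "pd j g x = vector_derivative (\<lambda>t. g (x + t *\<^sub>R axis j 1)) (at 0)"

fun iter_pd :: "'n::finite list \<Rightarrow> ((real, 'n) vec \<Rightarrow> complex) \<Rightarrow> (real, 'n) vec \<Rightarrow> complex" where
  "iter_pd [] g = g"
| "iter_pd (j # js) g = pd j (iter_pd js g)"

definition smooth_fun :: "((real, 'n::finite) vec) set \<Rightarrow> ((real, 'n) vec \<Rightarrow> complex) \<Rightarrow> bool" where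
  "smooth_fun \<Omega> g \<longleftrightarrow>
     (\<forall>js. continuous_on \<Omega> (iter_pd js g) \<and>
        (\<forall>j. \<forall>x\<in>\<Omega>. (\<lambda>t. iter_pd js g (x + t *\<^sub>R axis j 1)) differentiable (at 0)))"

definition cl_smooth :: "((real, 'n::finite) vec) set \<Rightarrow> ((real, 'n) vec \<Rightarrow> 'n cl) \<Rightarrow> bool" where
  "cl_smooth \<Omega> u \<longleftrightarrow> (\<forall>A. smooth_fun \<Omega> (\<lambda>x. u x A))"

definition vec_smooth :: "((real, 'n::finite) vec) set \<Rightarrow> ((real, 'n) vec \<Rightarrow> (real, 'n) vec) \<Rightarrow> bool" where
  "vec_smooth \<Omega> f \<longleftrightarrow> (\<forall>j. smooth_fun \<Omega> (\<lambda>x. complex_of_real (f x $ j)))"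

definition dirac :: "((real, 'n::{finite,linorder}) vec \<Rightarrow> 'n cl) \<Rightarrow> (real, 'n) vec \<Rightarrow> 'n cl" where
  "dirac u x = (\<lambda>C. \<Sum>j\<in>UNIV. cl_mult (cl_e j) (\<lambda>A. pd j (\<lambda>y. u y A) x) C)"

definition Mr :: "((real, 'n::{finite,linorder}) vec \<Rightarrow> 'n cl) \<Rightarrow> ((real, 'n) vec \<Rightarrow> 'n cl) \<Rightarrow> (real, 'n) vec \<Rightarrow> 'n cl" where
  "Mr g u = (\<lambda>x. cl_mult (u x) (g x))"

definition ieN :: "'n::{finite,linorder} cl" where
  "ieN = cl_scale \<i> cl_eN"

text \<open>A = M^{i e_N} (d - M^f),  B = M^{i e_N} (d + M^f)\<close>
definition opA :: "((real, 'n::{finite,linorder}) vec \<Rightarrow> (real, 'n) vec) \<Rightarrow> ((real, 'n) vec \<Rightarrow> 'n cl) \<Rightarrow> (real, 'n) vec \<Rightarrow> 'n cl" where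
  "opA f u = (\<lambda>x. cl_mult (cl_sub (dirac u x) (Mr (\<lambda>y. cl_vec (f y)) u x)) ieN)"

definition opB :: "((real, 'n::{finite,linorder}) vec \<Rightarrow> (real, 'n) vec) \<Rightarrow> ((real, 'n) vec \<Rightarrow> 'n cl) \<Rightarrow> (real, 'n) vec \<Rightarrow> 'n cl" where
  "opB f u = (\<lambda>x. cl_mult (cl_add (dirac u x) (Mr (\<lambda>y. cl_vec (f y)) u x)) ieN)"

definition ker_shift :: "((real, 'n::finite) vec) set \<Rightarrow> (((real, 'n) vec \<Rightarrow> 'n cl) \<Rightarrow> (real, 'n) vec \<Rightarrow> 'n cl)
     \<Rightarrow> complex \<Rightarrow> ((real, 'n) vec \<Rightarrow> 'n cl) set" where
  "ker_shift \<Omega> T c = {u. cl_smooth \<Omega> u \<and> (\<forall>x\<in>\<Omega>. T u x = cl_scale c (u x))}"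

definition ker_dirac_M :: "((real, 'n::{finite,linorder}) vec) set \<Rightarrow> complex \<Rightarrow> ((real, 'n) vec \<Rightarrow> 'n cl)
     \<Rightarrow> ((real, 'n) vec \<Rightarrow> 'n cl) set" where
  "ker_dirac_M \<Omega> s g = {u. cl_smooth \<Omega> u \<and>
      (\<forall>x\<in>\<Omega>. cl_add (dirac u x) (cl_scale s (Mr g u x)) = cl_zero)}"

text \<open>K is the direct sum of K1 and K2 (functions identified when they agree on Omega).\<close>
definition direct_sum_on :: "((real, 'n::finite) vec) set \<Rightarrow> ((real, 'n) vec \<Rightarrow> 'n cl) set
     \<Rightarrow> ((real, 'n) vec \<Rightarrow> 'n cl) set \<Rightarrow> ((real, 'n) vec \<Rightarrow> 'n cl) set \<Rightarrow> bool" where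
  "direct_sum_on \<Omega> K K1 K2 \<longleftrightarrow>
     K1 \<subseteq> K \<and> K2 \<subseteq> K \<and>
     (\<forall>u\<in>K. \<exists>u1\<in>K1. \<exists>u2\<in>K2. \<forall>x\<in>\<Omega>. u x = cl_add (u1 x) (u2 x)) \<and>
     (\<forall>u1\<in>K1. \<forall>u2\<in>K2. (\<forall>x\<in>\<Omega>. u1 x = u2 x) \<longrightarrow> (\<forall>x\<in>\<Omega>. u1 x = cl_zero))"

end

theory Submission
  imports Defs
begin

text \<open>Since \<open>n/2\<close> is odd, \<open>(i e\<^sub>N)\<^sup>2 = 1\<close>, so right multiplication by \<open>i e\<^sub>N\<close> is an
  involution. Multiplying \<open>(\<partial> \<plusminus> M\<^bsup>f\<^esup>) u \<plusminus> c u i e\<^sub>N = 0\<close> on the right by \<open>i e\<^sub>N\<close>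
  identifies the kernels on the right-hand sides with the eigenspaces of \<open>A\<close> (resp. \<open>B\<close>) for the
  eigenvalues \<open>\<plusminus>\<lambda>\<close>. For any linear operator \<open>T\<close> and \<open>\<lambda> \<noteq> 0\<close>, a solution of
  \<open>T\<^sup>2 u = \<lambda>\<^sup>2 u\<close> splits as \<open>u = (u + T u/\<lambda>)/2 + (u - T u/\<lambda>)/2\<close> into eigenvectors for
  \<open>\<lambda>\<close> and \<open>-\<lambda>\<close>, and the two eigenspaces meet only in \<open>0\<close>. The analytic input is that
  smooth functions form an algebra closed under partial derivatives, so that \<open>A\<close> and \<open>B\<close> act
  on them.\<close>

definition cont_partial_diff_on :: "((real, 'n::finite) vec) set \<Rightarrow> ((real, 'n) vec \<Rightarrow> complex) \<Rightarrow> bool" where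
  "cont_partial_diff_on \<Omega> g \<longleftrightarrow> continuous_on \<Omega> g \<and>
     (\<forall>j. \<forall>x\<in>\<Omega>. (\<lambda>t. g (x + t *\<^sub>R axis j 1)) differentiable (at 0))"

lemma smooth_fun_iff_iter_pd: "smooth_fun \<Omega> g \<longleftrightarrow> (\<forall>js. cont_partial_diff_on \<Omega> (iter_pd js g))"
  unfolding smooth_fun_def cont_partial_diff_on_def by blast

lemma cont_partial_diff_onD:
  "cont_partial_diff_on \<Omega> g \<Longrightarrow> x \<in> \<Omega> \<Longrightarrow> (\<lambda>t. g (x + t *\<^sub>R axis j 1)) differentiable (at 0)"
  unfolding cont_partial_diff_on_def by blast

lemma smooth_funD: "smooth_fun \<Omega> g \<Longrightarrow> cont_partial_diff_on \<Omega> g"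
  unfolding smooth_fun_iff_iter_pd by (drule spec[of _ "[]"]) simp

lemma eventually_axis_line_in_open:
  fixes x :: "(real, 'n::finite) vec"
  assumes "open \<Omega>" "x \<in> \<Omega>"
  shows "\<forall>\<^sub>F t in nhds 0. x + t *\<^sub>R axis j 1 \<in> \<Omega>"
proof -
  have "open ((\<lambda>t::real. x + t *\<^sub>R axis j 1) -` \<Omega>)"
    by (rule open_vimage[OF assms(1)]) (intro continuous_intros)
  then have "\<forall>\<^sub>F t in nhds 0. t \<in> (\<lambda>t::real. x + t *\<^sub>R axis j 1) -` \<Omega>"
    by (rule eventually_nhds_in_open) (simp add: assms(2))
  then show ?thesis by simp
qed

lemma pd_cong_on:
  fixes g h :: "(real, 'n::finite) vec \<Rightarrow> complex"
  assumes "open \<Omega>" "x \<in> \<Omega>" "\<forall>y\<in>\<Omega>. g y = h y"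
  shows "pd j g x = pd j h x"
  unfolding pd_def
  by (rule vector_derivative_cong_eq)
     (use eventually_axis_line_in_open[OF assms(1,2), of j] assms(3) in \<open>auto elim: eventually_mono\<close>)

lemma axis_differentiable_cong_on:
  fixes g h :: "(real, 'n::finite) vec \<Rightarrow> complex"
  assumes "open \<Omega>" "x \<in> \<Omega>" "\<forall>y\<in>\<Omega>. g y = h y"
    and "(\<lambda>t. g (x + t *\<^sub>R axis j 1)) differentiable (at 0)"
  shows "(\<lambda>t. h (x + t *\<^sub>R axis j 1)) differentiable (at 0)"
proof -
  have "\<forall>\<^sub>F t in at 0. g (x + t *\<^sub>R axis j 1) = h (x + t *\<^sub>R axis j 1)"
    using eventually_axis_line_in_open[OF assms(1,2), of j] assms(3)
    by (auto simp: eventually_nhds_conv_at elim: eventually_mono)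
  moreover obtain D where "((\<lambda>t. g (x + t *\<^sub>R axis j 1)) has_derivative D) (at 0)"
    using assms(4) unfolding differentiable_def by blast
  ultimately have "((\<lambda>t. h (x + t *\<^sub>R axis j 1)) has_derivative D) (at 0)"
    using has_derivative_transform_eventually[of _ D 0 UNIV] assms(2,3) by simp
  then show ?thesis unfolding differentiable_def by blast
qed

lemma cont_partial_diff_on_cong:
  assumes "open \<Omega>" "\<forall>y\<in>\<Omega>. g y = h y" "cont_partial_diff_on \<Omega> g"
  shows "cont_partial_diff_on \<Omega> h"
  unfolding cont_partial_diff_on_def
proof (intro conjI allI ballI)
  show "continuous_on \<Omega> h"
    using continuous_on_eq[of \<Omega> g h] assms(2,3) unfolding cont_partial_diff_on_def by simp
  show "(\<lambda>t. h (x + t *\<^sub>R axis j 1)) differentiable (at 0)" if "x \<in> \<Omega>" for j x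
    by (rule axis_differentiable_cong_on[OF assms(1) that assms(2) cont_partial_diff_onD[OF assms(3) that]])
qed

lemma iter_pd_cong_on:
  "open \<Omega> \<Longrightarrow> \<forall>y\<in>\<Omega>. g y = h y \<Longrightarrow> \<forall>y\<in>\<Omega>. iter_pd js g y = iter_pd js h y"
  by (induction js) (auto intro: pd_cong_on)

lemma iter_pd_snoc: "iter_pd (js @ [j]) g = iter_pd js (pd j g)"
  by (induction js) auto

lemma pd_lincomb:
  fixes g h :: "(real, 'n::finite) vec \<Rightarrow> complex"
  assumes "(\<lambda>t. g (x + t *\<^sub>R axis j 1)) differentiable (at 0)"
    "(\<lambda>t. h (x + t *\<^sub>R axis j 1)) differentiable (at 0)"
  shows "pd j (\<lambda>y. a * g y + b * h y) x = a * pd j g x + b * pd j h x"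
  unfolding pd_def
  by (intro vector_derivative_at derivative_intros assms[unfolded vector_derivative_works])

lemma pd_add:
  fixes g h :: "(real, 'n::finite) vec \<Rightarrow> complex"
  assumes "(\<lambda>t. g (x + t *\<^sub>R axis j 1)) differentiable (at 0)"
    "(\<lambda>t. h (x + t *\<^sub>R axis j 1)) differentiable (at 0)"
  shows "pd j (\<lambda>y. g y + h y) x = pd j g x + pd j h x"
  using pd_lincomb[OF assms, of 1 1] by simp

lemma pd_mult:
  fixes g h :: "(real, 'n::finite) vec \<Rightarrow> complex"
  assumes "(\<lambda>t. g (x + t *\<^sub>R axis j 1)) differentiable (at 0)"
    "(\<lambda>t. h (x + t *\<^sub>R axis j 1)) differentiable (at 0)"
  shows "pd j (\<lambda>y. g y * h y) x = pd j g x * h x + g x * pd j h x"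
proof -
  have "((\<lambda>t. g (x + t *\<^sub>R axis j 1) * h (x + t *\<^sub>R axis j 1)) has_vector_derivative
     (g (x + 0 *\<^sub>R axis j 1) * pd j h x + pd j g x * h (x + 0 *\<^sub>R axis j 1))) (at 0)"
    unfolding pd_def
    by (intro has_vector_derivative_mult assms[unfolded vector_derivative_works])
  then show ?thesis unfolding pd_def by (simp add: vector_derivative_at algebra_simps)
qed

lemma cont_partial_diff_on_add:
  "cont_partial_diff_on \<Omega> g \<Longrightarrow> cont_partial_diff_on \<Omega> h \<Longrightarrow> cont_partial_diff_on \<Omega> (\<lambda>y. g y + h y)"
  unfolding cont_partial_diff_on_def
  by (intro conjI allI ballI continuous_on_add differentiable_add) auto

lemma cont_partial_diff_on_mult:
  "cont_partial_diff_on \<Omega> g \<Longrightarrow> cont_partial_diff_on \<Omega> h \<Longrightarrow> cont_partial_diff_on \<Omega> (\<lambda>y. g y * h y)"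
  unfolding cont_partial_diff_on_def
  by (intro conjI allI ballI continuous_on_mult differentiable_mult) auto

lemma iter_pd_add:
  assumes "open \<Omega>" "x \<in> \<Omega>"
    and "\<And>ks. length ks < length js \<Longrightarrow> cont_partial_diff_on \<Omega> (iter_pd ks g) \<and> cont_partial_diff_on \<Omega> (iter_pd ks h)"
  shows "iter_pd js (\<lambda>y. g y + h y) x = iter_pd js g x + iter_pd js h x"
  using assms(2,3)
proof (induction js arbitrary: x)
  case (Cons j js)
  have lower: "cont_partial_diff_on \<Omega> (iter_pd ks g) \<and> cont_partial_diff_on \<Omega> (iter_pd ks h)"
    if "length ks \<le> length js" for ks
    using Cons.prems(2) that by simp
  have "\<forall>y\<in>\<Omega>. iter_pd js (\<lambda>y. g y + h y) y = iter_pd js g y + iter_pd js h y"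
    using Cons.IH lower by simp
  then have "pd j (iter_pd js (\<lambda>y. g y + h y)) x = pd j (\<lambda>y. iter_pd js g y + iter_pd js h y) x"
    by (rule pd_cong_on[OF assms(1) Cons.prems(1)])
  also have "\<dots> = pd j (iter_pd js g) x + pd j (iter_pd js h) x"
    using lower[of js] Cons.prems(1) by (intro pd_add cont_partial_diff_onD) auto
  finally show ?case by simp
qed simp

lemma smooth_fun_coinduct:
  assumes "open \<Omega>"
    and base: "\<And>g. g \<in> S \<Longrightarrow> cont_partial_diff_on \<Omega> g"
    and step: "\<And>g j. g \<in> S \<Longrightarrow> \<exists>g1\<in>S. \<exists>g2\<in>S. \<forall>x\<in>\<Omega>. pd j g x = g1 x + g2 x"
    and "g \<in> S"
  shows "smooth_fun \<Omega> g"
proof -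
  have "\<forall>g\<in>S. cont_partial_diff_on \<Omega> (iter_pd js g)" for js
  proof (induction "length js" arbitrary: js rule: less_induct)
    case less
    show ?case
    proof (cases js rule: rev_cases)
      case Nil
      then show ?thesis using base by simp
    next
      case (snoc ks j)
      show ?thesis
      proof
        fix g assume "g \<in> S"
        then obtain g1 g2 where g12: "g1 \<in> S" "g2 \<in> S" "\<forall>x\<in>\<Omega>. pd j g x = g1 x + g2 x"
          using step by blast
        have IH: "cont_partial_diff_on \<Omega> (iter_pd ks' g1) \<and> cont_partial_diff_on \<Omega> (iter_pd ks' g2)"
          if "length ks' \<le> length ks" for ks'
          using less that g12(1,2) snoc by auto
        have "\<forall>x\<in>\<Omega>. iter_pd ks g1 x + iter_pd ks g2 x = iter_pd js g x"
          using iter_pd_cong_on[OF assms(1) g12(3), of ks] iter_pd_add[OF assms(1), of _ ks g1 g2] IH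
          by (simp add: snoc iter_pd_snoc)
        moreover have "cont_partial_diff_on \<Omega> (\<lambda>x. iter_pd ks g1 x + iter_pd ks g2 x)"
          using IH by (simp add: cont_partial_diff_on_add)
        ultimately show "cont_partial_diff_on \<Omega> (iter_pd js g)"
          by (rule cont_partial_diff_on_cong[OF assms(1)])
      qed
    qed
  qed
  then show ?thesis
    using assms(4) unfolding smooth_fun_iff_iter_pd by blast
qed

lemma iter_pd_const: "iter_pd js (\<lambda>_. c) = (if js = [] then (\<lambda>_. c) else (\<lambda>_. 0))"
proof (induction js)
  case (Cons j js)
  have "pd j (\<lambda>_. c) = (\<lambda>_. 0)" "pd j (\<lambda>_. 0) = (\<lambda>_. 0)" by (auto simp: pd_def)
  then show ?case using Cons by simp
qed simp

lemma smooth_fun_const: "smooth_fun \<Omega> (\<lambda>_. c)"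
  unfolding smooth_fun_iff_iter_pd cont_partial_diff_on_def iter_pd_const by auto

lemma smooth_fun_pd: "smooth_fun \<Omega> g \<Longrightarrow> smooth_fun \<Omega> (pd j g)"
  unfolding smooth_fun_iff_iter_pd by (simp flip: iter_pd_snoc)

lemma smooth_fun_add:
  assumes "open \<Omega>" "smooth_fun \<Omega> g" "smooth_fun \<Omega> h"
  shows "smooth_fun \<Omega> (\<lambda>y. g y + h y)"
proof (rule smooth_fun_coinduct[OF assms(1)])
  let ?S = "{\<lambda>y. g y + h y | g h. smooth_fun \<Omega> g \<and> smooth_fun \<Omega> h}"
  have mem: "(\<lambda>y. a y + b y) \<in> ?S" if "smooth_fun \<Omega> a" "smooth_fun \<Omega> b" for a b
    using that by blast
  show "(\<lambda>y. g y + h y) \<in> ?S" by (rule mem[OF assms(2,3)])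
  show "cont_partial_diff_on \<Omega> G" if "G \<in> ?S" for G
    using that by (auto intro: cont_partial_diff_on_add[OF smooth_funD smooth_funD])
  show "\<exists>g1\<in>?S. \<exists>g2\<in>?S. \<forall>x\<in>\<Omega>. pd j G x = g1 x + g2 x" if "G \<in> ?S" for G j
  proof -
    obtain g h where G: "G = (\<lambda>y. g y + h y)" "smooth_fun \<Omega> g" "smooth_fun \<Omega> h"
      using \<open>G \<in> ?S\<close> by blast
    show ?thesis
    proof (intro bexI)
      show "\<forall>x\<in>\<Omega>. pd j G x = (pd j g x + pd j h x) + (0 + 0)"
        using G by (auto intro!: pd_add cont_partial_diff_onD smooth_funD)
    qed (intro mem smooth_fun_pd smooth_fun_const G(2,3))+
  qed
qed

lemma smooth_fun_mult:
  assumes "open \<Omega>" "smooth_fun \<Omega> g" "smooth_fun \<Omega> h"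
  shows "smooth_fun \<Omega> (\<lambda>y. g y * h y)"
proof (rule smooth_fun_coinduct[OF assms(1)])
  let ?S = "{\<lambda>y. g y * h y | g h. smooth_fun \<Omega> g \<and> smooth_fun \<Omega> h}"
  have mem: "(\<lambda>y. a y * b y) \<in> ?S" if "smooth_fun \<Omega> a" "smooth_fun \<Omega> b" for a b
    using that by blast
  show "(\<lambda>y. g y * h y) \<in> ?S" by (rule mem[OF assms(2,3)])
  show "cont_partial_diff_on \<Omega> G" if "G \<in> ?S" for G
    using that by (auto intro: cont_partial_diff_on_mult[OF smooth_funD smooth_funD])
  show "\<exists>g1\<in>?S. \<exists>g2\<in>?S. \<forall>x\<in>\<Omega>. pd j G x = g1 x + g2 x" if "G \<in> ?S" for G j
  proof -
    obtain g h where G: "G = (\<lambda>y. g y * h y)" "smooth_fun \<Omega> g" "smooth_fun \<Omega> h"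
      using \<open>G \<in> ?S\<close> by blast
    show ?thesis
    proof (intro bexI)
      show "\<forall>x\<in>\<Omega>. pd j G x = pd j g x * h x + g x * pd j h x"
        using G by (auto intro!: pd_mult cont_partial_diff_onD smooth_funD)
    qed (intro mem smooth_fun_pd G(2,3))+
  qed
qed

lemma smooth_fun_cmult: "open \<Omega> \<Longrightarrow> smooth_fun \<Omega> g \<Longrightarrow> smooth_fun \<Omega> (\<lambda>y. c * g y)"
  by (rule smooth_fun_mult[OF _ smooth_fun_const])

lemma smooth_fun_sum:
  assumes "open \<Omega>" "finite I"
  shows "(\<And>i. i \<in> I \<Longrightarrow> smooth_fun \<Omega> (g i)) \<Longrightarrow> smooth_fun \<Omega> (\<lambda>x. \<Sum>i\<in>I. g i x)"
  using assms(2) by (induction I rule: finite_induct) (simp_all add: smooth_fun_const smooth_fun_add[OF assms(1)])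

lemma smooth_fun_if: "smooth_fun \<Omega> g \<Longrightarrow> smooth_fun \<Omega> (\<lambda>x. if P then g x else 0)"
  by (cases P) (simp_all add: smooth_fun_const)

lemma sum_eq_single: "finite S \<Longrightarrow> x \<in> S \<Longrightarrow> (\<And>y. y \<in> S \<Longrightarrow> y \<noteq> x \<Longrightarrow> g y = 0) \<Longrightarrow> sum g S = g x"
  by (simp add: sum.remove)

lemma cl_mult_add_left: "cl_mult (cl_add p q) c = cl_add (cl_mult p c) (cl_mult q c)"
  unfolding cl_mult_def cl_add_def
  by (auto simp: sum.distrib[symmetric] algebra_simps intro!: ext sum.cong)

lemma cl_mult_add_right: "cl_mult c (cl_add p q) = cl_add (cl_mult c p) (cl_mult c q)"
  unfolding cl_mult_def cl_add_def
  by (auto simp: sum.distrib[symmetric] algebra_simps intro!: ext sum.cong)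

lemma cl_mult_scale_left: "cl_mult (cl_scale a p) c = cl_scale a (cl_mult p c)"
  unfolding cl_mult_def cl_scale_def
  by (auto simp: sum_distrib_left algebra_simps intro!: ext sum.cong)

lemma cl_mult_scale_right: "cl_mult c (cl_scale a p) = cl_scale a (cl_mult c p)"
  unfolding cl_mult_def cl_scale_def
  by (auto simp: sum_distrib_left algebra_simps intro!: ext sum.cong)

lemma cl_mult_ieN: "cl_mult a ieN = (\<lambda>C. \<i> * cl_sign (-C) UNIV * a (-C))"
proof
  fix C
  have inner: "(\<Sum>B\<in>UNIV. if (A - B) \<union> (B - A) = C then cl_sign A B * a A * ieN B else 0)
      = (if -A = C then \<i> * cl_sign A UNIV * a A else 0)" for A
    by (subst sum_eq_single[where x=UNIV]) (auto simp: ieN_def cl_scale_def cl_eN_def Compl_eq_Diff_UNIV)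
  show "cl_mult a ieN C = \<i> * cl_sign (-C) UNIV * a (-C)"
    unfolding cl_mult_def inner
    by (subst sum_eq_single[where x="-C"]) auto
qed

lemma card_less_pairs: "2 * card {(a::'a::{finite,linorder}, b). b < a} + CARD('a) = CARD('a) * CARD('a)"
proof -
  let ?P = "{(a::'a, b). b < a}" and ?Q = "{(a::'a, b). a < b}" and ?D = "{(a::'a, b). a = b}"
  have U: "(UNIV :: ('a \<times> 'a) set) = ?P \<union> ?Q \<union> ?D" by (auto simp: not_less_iff_gr_or_eq)
  have "card (UNIV :: ('a \<times> 'a) set) = card ?P + card ?Q + card ?D"
    unfolding U by (subst card_Un_disjoint, auto)+
  moreover have "card ?Q = card ?P"
  proof -
    have "?Q = (\<lambda>(a, b). (b, a)) ` ?P" "inj_on (\<lambda>(a, b). (b, a)) ?P" by (auto simp: inj_on_def)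
    then show ?thesis by (simp add: card_image)
  qed
  moreover have "card ?D = CARD('a)"
  proof -
    have "?D = (\<lambda>a. (a, a)) ` UNIV" "inj (\<lambda>a::'a. (a, a))" by (auto simp: inj_on_def)
    then show ?thesis by (simp add: card_image)
  qed
  ultimately show ?thesis by (simp add: card_cartesian_product)
qed

text \<open>The two signs multiply to \<open>(-1)\<^bsup>n(n+1)/2\<^esup>\<close>, the sign of \<open>e\<^sub>N\<^sup>2\<close>; for even \<open>n\<close> this
  is \<open>-1\<close> exactly when \<open>n/2\<close> is odd, which makes \<open>(i e\<^sub>N)\<^sup>2 = 1\<close>.\<close>

lemma cl_sign_Compl_UNIV:
  assumes "even CARD('n)" "odd (CARD('n) div 2)"
  shows "cl_sign (-C) (UNIV::'n::{finite,linorder} set) * cl_sign C UNIV = -1"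
proof -
  let ?X = "{(a, b). a \<in> -C \<and> b \<in> (UNIV::'n set) \<and> b < a}"
  let ?Y = "{(a, b). a \<in> C \<and> b \<in> (UNIV::'n set) \<and> b < a}"
  have "card (?X \<union> ?Y) = card ?X + card ?Y" by (rule card_Un_disjoint) auto
  moreover have "?X \<union> ?Y = {(a, b). b < a}" by auto
  ultimately have pairs: "card ?X + card ?Y = card {(a::'n, b). b < a}" by simp
  have "card (-C \<union> C) = card (-C) + card C" by (rule card_Un_disjoint) auto
  then have blades: "card (-C \<inter> UNIV) + card (C \<inter> UNIV) = CARD('n)" by (simp add: Un_commute)
  obtain m where m: "CARD('n) = 2 * m" "odd m"
    using assms by (auto elim: evenE)
  have "2 * (card {(a::'n, b). b < a} + CARD('n)) = CARD('n) * (CARD('n) + 1)"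
    using card_less_pairs[where 'a='n] by (simp add: algebra_simps)
  then have "card {(a::'n, b). b < a} + CARD('n) = m * (2 * m + 1)"
    unfolding m(1) by (simp add: algebra_simps)
  then have "card ?X + card (-C \<inter> UNIV) + (card ?Y + card (C \<inter> UNIV)) = m * (2 * m + 1)"
    using pairs blades by linarith
  then have "odd (card ?X + card (-C \<inter> UNIV) + (card ?Y + card (C \<inter> UNIV)))"
    using m(2) by simp
  then show ?thesis
    unfolding cl_sign_def power_add[symmetric] by simp
qed

lemma cl_mult_ieN_ieN:
  assumes "even CARD('n)" "odd (CARD('n) div 2)"
  shows "cl_mult (cl_mult a ieN) (ieN::'n::{finite,linorder} cl) = a"
proof
  fix C
  have "cl_mult (cl_mult a ieN) ieN C = (\<i> * \<i>) * (cl_sign (-C) UNIV * cl_sign C UNIV) * a C"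
    unfolding cl_mult_ieN by (simp add: algebra_simps)
  then show "cl_mult (cl_mult a ieN) ieN C = a C"
    using cl_sign_Compl_UNIV[OF assms, of C] by simp
qed

lemma smooth_fun_cl_mult:
  assumes "open \<Omega>" "\<And>A. smooth_fun \<Omega> (\<lambda>x. a x A)" "\<And>B. smooth_fun \<Omega> (\<lambda>x. b x B)"
  shows "smooth_fun \<Omega> (\<lambda>x. cl_mult (a x) (b x) C)"
  unfolding cl_mult_def
  by (intro smooth_fun_sum[OF assms(1)] smooth_fun_if smooth_fun_mult[OF assms(1)]
      smooth_fun_const assms(2,3) finite)

lemma smooth_fun_dirac:
  assumes "open \<Omega>" "cl_smooth \<Omega> u"
  shows "smooth_fun \<Omega> (\<lambda>x. dirac u x C)"
  unfolding dirac_def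
  by (intro smooth_fun_sum[OF assms(1)] smooth_fun_cl_mult[OF assms(1)] smooth_fun_const smooth_fun_pd
      assms(2)[unfolded cl_smooth_def, rule_format] finite)

lemma smooth_fun_Mr_vec:
  assumes "open \<Omega>" "cl_smooth \<Omega> u" "vec_smooth \<Omega> f"
  shows "smooth_fun \<Omega> (\<lambda>x. Mr (\<lambda>y. cl_vec (f y)) u x C)"
  unfolding Mr_def cl_vec_def
  by (intro smooth_fun_cl_mult[OF assms(1)] smooth_fun_if
      assms(2)[unfolded cl_smooth_def, rule_format] assms(3)[unfolded vec_smooth_def, rule_format])

lemma cl_smooth_lincomb:
  assumes "open \<Omega>" "cl_smooth \<Omega> u" "cl_smooth \<Omega> v"
  shows "cl_smooth \<Omega> (\<lambda>y. cl_add (cl_scale a (u y)) (cl_scale b (v y)))"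
  unfolding cl_smooth_def cl_add_def cl_scale_def
  by (intro allI smooth_fun_add[OF assms(1)] smooth_fun_cmult[OF assms(1)]
      assms(2,3)[unfolded cl_smooth_def, rule_format])

lemma dirac_cong_on:
  assumes "open \<Omega>" "x \<in> \<Omega>" "\<forall>y\<in>\<Omega>. u y = v y"
  shows "dirac u x = dirac v x"
proof -
  have "(\<lambda>A. pd j (\<lambda>y. u y A) x) = (\<lambda>A. pd j (\<lambda>y. v y A) x)" for j
    by (intro ext pd_cong_on[OF assms(1,2)]) (simp add: assms(3))
  then show ?thesis unfolding dirac_def by simp
qed

lemma dirac_lincomb:
  assumes "x \<in> \<Omega>" "cl_smooth \<Omega> u" "cl_smooth \<Omega> v"
  shows "dirac (\<lambda>y. cl_add (cl_scale a (u y)) (cl_scale b (v y))) x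
       = cl_add (cl_scale a (dirac u x)) (cl_scale b (dirac v x))"
proof -
  have "(\<lambda>A. pd j (\<lambda>y. cl_add (cl_scale a (u y)) (cl_scale b (v y)) A) x) =
     cl_add (cl_scale a (\<lambda>A. pd j (\<lambda>y. u y A) x)) (cl_scale b (\<lambda>A. pd j (\<lambda>y. v y A) x))" for j
    using assms unfolding cl_smooth_def cl_add_def cl_scale_def
    by (intro ext pd_lincomb cont_partial_diff_onD[OF smooth_funD]) auto
  then show ?thesis
    by (simp only: dirac_def cl_mult_add_right cl_mult_scale_right)
       (simp add: cl_add_def cl_scale_def sum.distrib sum_distrib_left)
qed

locale local_linear_cl_operator =
  fixes \<Omega> :: "((real, 'n::{finite,linorder}) vec) set"
    and T :: "((real, 'n) vec \<Rightarrow> 'n cl) \<Rightarrow> (real, 'n) vec \<Rightarrow> 'n cl"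
  assumes open_domain: "open \<Omega>"
    and smooth_preserving: "cl_smooth \<Omega> u \<Longrightarrow> cl_smooth \<Omega> (T u)"
    and linear_on_smooth: "cl_smooth \<Omega> u \<Longrightarrow> cl_smooth \<Omega> v \<Longrightarrow> x \<in> \<Omega> \<Longrightarrow>
      T (\<lambda>y. cl_add (cl_scale a (u y)) (cl_scale b (v y))) x = cl_add (cl_scale a (T u x)) (cl_scale b (T v x))"
    and local: "\<forall>y\<in>\<Omega>. u y = v y \<Longrightarrow> x \<in> \<Omega> \<Longrightarrow> T u x = T v x"
begin

lemma scale_on_smooth:
  assumes "cl_smooth \<Omega> u" "x \<in> \<Omega>"
  shows "T (\<lambda>y. cl_scale c (u y)) x = cl_scale c (T u x)"
  using linear_on_smooth[OF assms(1,1,2), of c 0] by (simp add: cl_add_def cl_scale_def)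

lemma ker_shift_subset_ker_square:
  assumes "c * c = d"
  shows "ker_shift \<Omega> T c \<subseteq> ker_shift \<Omega> (\<lambda>u. T (T u)) d"
proof
  fix u assume u: "u \<in> ker_shift \<Omega> T c"
  have "T (T u) x = cl_scale d (u x)" if "x \<in> \<Omega>" for x
  proof -
    have "T (T u) x = T (\<lambda>y. cl_scale c (u y)) x"
      using u that by (intro local) (simp add: ker_shift_def)
    also have "\<dots> = cl_scale c (T u x)"
      using u that by (simp add: ker_shift_def scale_on_smooth)
    also have "\<dots> = cl_scale d (u x)"
      using u that assms by (auto simp: ker_shift_def cl_scale_def)
    finally show ?thesis .
  qed
  then show "u \<in> ker_shift \<Omega> (\<lambda>u. T (T u)) d"
    using u unfolding ker_shift_def by blast
qed

lemma eigen_projection_in_ker_shift: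
  assumes "mu \<noteq> 0" "u \<in> ker_shift \<Omega> (\<lambda>u. T (T u)) (mu^2)"
  shows "(\<lambda>y. cl_add (cl_scale (1/2) (u y)) (cl_scale (1/(2*mu)) (T u y))) \<in> ker_shift \<Omega> T mu"
  unfolding ker_shift_def
proof (intro CollectI conjI ballI)
  have u: "cl_smooth \<Omega> u" "\<And>x. x \<in> \<Omega> \<Longrightarrow> T (T u) x = cl_scale (mu^2) (u x)"
    using assms(2) unfolding ker_shift_def by blast+
  then show "cl_smooth \<Omega> (\<lambda>y. cl_add (cl_scale (1/2) (u y)) (cl_scale (1/(2*mu)) (T u y)))"
    by (intro cl_smooth_lincomb open_domain smooth_preserving)
  fix x assume "x \<in> \<Omega>"
  then have "T (\<lambda>y. cl_add (cl_scale (1/2) (u y)) (cl_scale (1/(2*mu)) (T u y))) x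
      = cl_add (cl_scale (1/2) (T u x)) (cl_scale (1/(2*mu)) (cl_scale (mu^2) (u x)))"
    using u by (simp add: linear_on_smooth smooth_preserving)
  also have "\<dots> = cl_scale mu (cl_add (cl_scale (1/2) (u x)) (cl_scale (1/(2*mu)) (T u x)))"
    using assms(1) by (simp add: fun_eq_iff cl_add_def cl_scale_def field_simps power2_eq_square)
  finally show "T (\<lambda>y. cl_add (cl_scale (1/2) (u y)) (cl_scale (1/(2*mu)) (T u y))) x
      = cl_scale mu (cl_add (cl_scale (1/2) (u x)) (cl_scale (1/(2*mu)) (T u x)))" .
qed

lemma ker_square_decomposition:
  assumes "mu \<noteq> 0" "u \<in> ker_shift \<Omega> (\<lambda>u. T (T u)) (mu^2)"
  shows "\<exists>u1\<in>ker_shift \<Omega> T mu. \<exists>u2\<in>ker_shift \<Omega> T (-mu). \<forall>x\<in>\<Omega>. u x = cl_add (u1 x) (u2 x)"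
proof (intro bexI)
  show "(\<lambda>y. cl_add (cl_scale (1/2) (u y)) (cl_scale (1/(2*mu)) (T u y))) \<in> ker_shift \<Omega> T mu"
    by (rule eigen_projection_in_ker_shift[OF assms])
  show "(\<lambda>y. cl_add (cl_scale (1/2) (u y)) (cl_scale (1/(2*-mu)) (T u y))) \<in> ker_shift \<Omega> T (-mu)"
    using eigen_projection_in_ker_shift[of "-mu" u] assms by simp
  show "\<forall>x\<in>\<Omega>. u x = cl_add (cl_add (cl_scale (1/2) (u x)) (cl_scale (1/(2*mu)) (T u x)))
                              (cl_add (cl_scale (1/2) (u x)) (cl_scale (1/(2*-mu)) (T u x)))"
    using assms(1) by (simp add: cl_add_def cl_scale_def field_simps)
qed

lemma ker_shift_opposite_agree_eq_zero:
  assumes "mu \<noteq> 0" "u1 \<in> ker_shift \<Omega> T mu" "u2 \<in> ker_shift \<Omega> T (-mu)"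
    and "\<forall>x\<in>\<Omega>. u1 x = u2 x" "x \<in> \<Omega>"
  shows "u1 x = cl_zero"
proof -
  have "cl_scale mu (u1 x) = cl_scale (-mu) (u1 x)"
    using local[OF assms(4,5)] assms(2-5) unfolding ker_shift_def by simp
  then show ?thesis
    using assms(1) by (simp add: fun_eq_iff cl_scale_def cl_zero_def)
qed

lemma direct_sum_ker_square:
  assumes "mu \<noteq> 0"
  shows "direct_sum_on \<Omega> (ker_shift \<Omega> (\<lambda>u. T (T u)) (mu^2)) (ker_shift \<Omega> T mu) (ker_shift \<Omega> T (-mu))"
  unfolding direct_sum_on_def
  using ker_shift_subset_ker_square[of mu "mu^2"] ker_shift_subset_ker_square[of "-mu" "mu^2"]
    ker_square_decomposition[OF assms] ker_shift_opposite_agree_eq_zero[OF assms]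
  by (auto simp: power2_eq_square)

end

definition opT :: "complex \<Rightarrow> ((real, 'n::{finite,linorder}) vec \<Rightarrow> (real, 'n) vec)
    \<Rightarrow> ((real, 'n) vec \<Rightarrow> 'n cl) \<Rightarrow> (real, 'n) vec \<Rightarrow> 'n cl" where
  "opT s f u = (\<lambda>x. cl_mult (cl_add (dirac u x) (cl_scale s (Mr (\<lambda>y. cl_vec (f y)) u x))) ieN)"

lemma opA_eq_opT: "opA f = opT (-1) f"
  unfolding opA_def opT_def cl_sub_def cl_add_def cl_scale_def by simp

lemma opB_eq_opT: "opB f = opT 1 f"
  unfolding opB_def opT_def cl_scale_def by simp

lemma local_linear_cl_operator_opT:
  assumes "open \<Omega>" "vec_smooth \<Omega> f"
  shows "local_linear_cl_operator \<Omega> (opT s f)"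
proof
  show "cl_smooth \<Omega> (opT s f u)" if "cl_smooth \<Omega> u" for u
    unfolding cl_smooth_def opT_def cl_add_def cl_scale_def
    by (intro allI smooth_fun_cl_mult[OF assms(1)] smooth_fun_const smooth_fun_add[OF assms(1)]
        smooth_fun_cmult[OF assms(1)] smooth_fun_dirac[OF assms(1) that] smooth_fun_Mr_vec[OF assms(1) that assms(2)])
  show "opT s f (\<lambda>y. cl_add (cl_scale a (u y)) (cl_scale b (v y))) x
      = cl_add (cl_scale a (opT s f u x)) (cl_scale b (opT s f v x))"
    if "cl_smooth \<Omega> u" "cl_smooth \<Omega> v" "x \<in> \<Omega>" for u v a b x
    by (simp only: opT_def Mr_def dirac_lincomb[OF that(3,1,2)] cl_mult_add_left cl_mult_scale_left)
       (simp add: fun_eq_iff cl_add_def cl_scale_def algebra_simps)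
  show "opT s f u x = opT s f v x" if "\<forall>y\<in>\<Omega>. u y = v y" "x \<in> \<Omega>" for u v x
    unfolding opT_def Mr_def using dirac_cong_on[OF assms(1) that(2,1)] that by simp
qed (fact assms(1))

lemma dirac_M_ieN_eq_zero_iff:
  assumes "even CARD('n)" "odd (CARD('n) div 2)"
  shows "cl_add D (cl_scale s (cl_mult w (cl_add F (cl_scale c (ieN::'n::{finite,linorder} cl))))) = cl_zero
     \<longleftrightarrow> cl_mult (cl_add D (cl_scale s (cl_mult w F))) ieN = cl_scale (-(s*c)) w"
proof -
  define Q where "Q = cl_add D (cl_scale s (cl_mult w F))"
  have L: "cl_add D (cl_scale s (cl_mult w (cl_add F (cl_scale c ieN)))) = cl_add Q (cl_scale (s*c) (cl_mult w ieN))"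
    unfolding Q_def cl_mult_add_right cl_mult_scale_right by (simp add: fun_eq_iff cl_add_def cl_scale_def algebra_simps)
  have "cl_add Q (cl_scale (s*c) (cl_mult w ieN)) = cl_zero \<longleftrightarrow> Q = cl_scale (-(s*c)) (cl_mult w ieN)"
    unfolding cl_add_def cl_scale_def cl_zero_def fun_eq_iff by (auto simp: add_eq_0_iff)
  also have "\<dots> \<longleftrightarrow> cl_mult Q ieN = cl_scale (-(s*c)) w"
    using cl_mult_ieN_ieN[OF assms] by (metis cl_mult_scale_left)
  finally show ?thesis unfolding L Q_def .
qed

lemma ker_dirac_M_eq_ker_shift_opT:
  assumes "even CARD('n)" "odd (CARD('n) div 2)"
  shows "ker_dirac_M \<Omega> s (\<lambda>x. cl_add (cl_vec (f x)) (cl_scale c (ieN::'n::{finite,linorder} cl)))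
       = ker_shift \<Omega> (opT s f) (-(s*c))"
  unfolding ker_dirac_M_def ker_shift_def opT_def Mr_def dirac_M_ieN_eq_zero_iff[OF assms] ..

theorem theorem7p1:
  fixes \<Omega> :: "((real, 'n::{finite,linorder}) vec) set"
    and f :: "(real, 'n) vec \<Rightarrow> (real, 'n) vec"
    and lam :: complex
  assumes "even CARD('n)" and "odd (CARD('n) div 2)"
    and "open \<Omega>"
    and "vec_smooth \<Omega> f"
    and "lam \<noteq> 0"
  shows "direct_sum_on \<Omega> (ker_shift \<Omega> (\<lambda>u. opA f (opA f u)) (lam^2))
           (ker_dirac_M \<Omega> (-1) (\<lambda>x. cl_add (cl_vec (f x)) (cl_scale lam ieN)))
           (ker_dirac_M \<Omega> (-1) (\<lambda>x. cl_sub (cl_vec (f x)) (cl_scale lam ieN)))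
       \<and> direct_sum_on \<Omega> (ker_shift \<Omega> (\<lambda>u. opB f (opB f u)) (lam^2))
           (ker_dirac_M \<Omega> 1 (\<lambda>x. cl_sub (cl_vec (f x)) (cl_scale lam ieN)))
           (ker_dirac_M \<Omega> 1 (\<lambda>x. cl_add (cl_vec (f x)) (cl_scale lam ieN)))"
proof -
  have sub: "cl_sub (cl_vec (f x)) (cl_scale lam ieN) = cl_add (cl_vec (f x)) (cl_scale (-lam) ieN)" for x
    by (simp add: cl_sub_def cl_add_def cl_scale_def)
  have "direct_sum_on \<Omega> (ker_shift \<Omega> (\<lambda>u. opT s f (opT s f u)) (lam^2))
      (ker_shift \<Omega> (opT s f) lam) (ker_shift \<Omega> (opT s f) (-lam))" for s
    using local_linear_cl_operator.direct_sum_ker_square[OF local_linear_cl_operator_opT[OF assms(3,4)] assms(5)] .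
  then show ?thesis
    unfolding opA_eq_opT opB_eq_opT sub ker_dirac_M_eq_ker_shift_opT[OF assms(1,2)] by simp
qed

end
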